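(* For every $C>0$ there exist a two-element state space $\Omega=\{a,b\}$, reversible ergodic Markov chains $\mathcal{M}$ and $\mathcal{M}'$ on $\Omega$ with the same stationary distribution $\pi$, and an $(\mathcal{M},\mathcal{M}')$-flow $f$ with $A(f)\le 3$, such that $$\tau_a\Big(\mathcal{M},\frac14\Big)\ >\ C\cdot A(f)\left[\tau\Big(\mathcal{M}',\frac{1}{2e}\Big)+1\right]\ln\frac{1}{\frac14\,\pi(a)}.$$ Concretely one may take $\mathcal{M}$ with $P(a,b)=P(b,a)=1-\delta$, $P(a,a)=P(b,b)=\delta$ for sufficiently small $\delta\in(0,\frac12]$, and $\mathcal{M}'$ the chain with $P'(x,y)=\frac12$ for all $x,y\in\Omega$. (Thus, unlike in the case of odd flows, no bound of this form in terms of the congestion of an arbitrary flow is possible.)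
   Context: A (discrete-time) Markov chain on a finite state space $\Omega$ with transition matrix $P$ is ergodic if irreducible and aperiodic; it then has a unique stationary distribution $\pi>0$. It is reversible if $\pi(x)P(x,y)=\pi(y)P(y,x)$. Variation distance: $\|\theta_1-\theta_2\|=\frac12\sum_i|\theta_1(i)-\theta_2(i)|$. Mixing time: $\tau_x(\mathcal{M},\varepsilon)=\min\{t>0 \text{ integer}: \|P^{t'}(x,\cdot)-\pi\|\le\varepsilon \ \forall t'\ge t\}$, $\tau(\mathcal{M},\varepsilon)=\max_x\tau_x(\mathcal{M},\varepsilon)$. Flows: Let $\mathcal{M}$ have transition matrix $P$ and stationary distribution $\pi$, and $\mathcal{M}'$ have transition matrix $P'$ and stationary distribution $\pi'$. Let $E^*(\mathcal{M})=\{(x,y): P(x,y)>0\}$ (pairs not necessarily distinct), similarly $E^*(\mathcal{M}')$. For $(x,y)\in E^*(\mathcal{M}')$, $\mathcal{P}_{x,y}$ is the set of paths $\gamma=(x=x_0,\dots,x_k=y)$ with each $(x_i,x_{i+1})\in E^*(\mathcal{M})$ and each $(z,w)\in E^*(\mathcal{M})$ appearing at most twice as a consecutive pair on $\gamma$; $|\gamma|=k$. $\mathcal{P}=\bigcup_{(x,y)\in E^*(\mathcal{M}')}\mathcal{P}_{x,y}$. An $(\mathcal{M},\mathcal{M}')$-flow is $f:\mathcal{P}\to[0,1]$ with $\sum_{\gamma\in\mathcal{P}_{x,y}}f(\gamma)=\pi'(x)P'(x,y)$ for all $(x,y)\in E^*(\mathcal{M}')$. With $r((z,w),\gamma)$ the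 number of times $(z,w)$ appears on $\gamma$, $A_{z,w}(f)=\frac{1}{\pi(z)P(z,w)}\sum_{\gamma:(z,w)\in\gamma}r((z,w),\gamma)|\gamma|f(\gamma)$ and $A(f)=\max_{(z,w)\in E^*(\mathcal{M})}A_{z,w}(f)$. *)

theory Defs
  imports Complex_Main
begin

(* A Markov chain on a finite state space S is given by a transition matrix
   P :: 'a => 'a => real (only its values on S x S matter). *)

definition stochastic :: "'a set \<Rightarrow> ('a \<Rightarrow> 'a \<Rightarrow> real) \<Rightarrow> bool" where
  "stochastic S P \<longleftrightarrow> finite S \<and> S \<noteq> {} \<and>
     (\<forall>x\<in>S. \<forall>y\<in>S. 0 \<le> P x y) \<and> (\<forall>x\<in>S. (\<Sum>y\<in>S. P x y) = 1)"

fun matpow :: "'a set \<Rightarrow> ('a \<Rightarrow> 'a \<Rightarrow> real) \<Rightarrow> nat \<Rightarrow> 'a \<Rightarrow> 'a \<Rightarrow> real" where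
  "matpow S P 0 x y = (if x = y then 1 else 0)"
| "matpow S P (Suc t) x y = (\<Sum>z\<in>S. matpow S P t x z * P z y)"

definition irreducible_chain :: "'a set \<Rightarrow> ('a \<Rightarrow> 'a \<Rightarrow> real) \<Rightarrow> bool" where
  "irreducible_chain S P \<longleftrightarrow> (\<forall>x\<in>S. \<forall>y\<in>S. \<exists>t. 0 < matpow S P t x y)"

definition aperiodic_chain :: "'a set \<Rightarrow> ('a \<Rightarrow> 'a \<Rightarrow> real) \<Rightarrow> bool" where
  "aperiodic_chain S P \<longleftrightarrow> (\<forall>x\<in>S. Gcd {t. 1 \<le> t \<and> 0 < matpow S P t x x} = 1)"

definition ergodic :: "'a set \<Rightarrow> ('a \<Rightarrow> 'a \<Rightarrow> real) \<Rightarrow> bool" where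
  "ergodic S P \<longleftrightarrow> stochastic S P \<and> irreducible_chain S P \<and> aperiodic_chain S P"

definition stationary :: "'a set \<Rightarrow> ('a \<Rightarrow> 'a \<Rightarrow> real) \<Rightarrow> ('a \<Rightarrow> real) \<Rightarrow> bool" where
  "stationary S P p \<longleftrightarrow> (\<forall>x\<in>S. 0 \<le> p x) \<and> (\<Sum>x\<in>S. p x) = 1 \<and>
     (\<forall>y\<in>S. (\<Sum>x\<in>S. p x * P x y) = p y)"

definition reversible :: "'a set \<Rightarrow> ('a \<Rightarrow> 'a \<Rightarrow> real) \<Rightarrow> ('a \<Rightarrow> real) \<Rightarrow> bool" where
  "reversible S P p \<longleftrightarrow> (\<forall>x\<in>S. \<forall>y\<in>S. p x * P x y = p y * P y x)"

definition tvdist :: "'a set \<Rightarrow> ('a \<Rightarrow> real) \<Rightarrow> ('a \<Rightarrow> real) \<Rightarrow> real" where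
  "tvdist S \<mu> \<nu> = (1/2) * (\<Sum>i\<in>S. \<bar>\<mu> i - \<nu> i\<bar>)"

definition mixing_time_from ::
  "'a set \<Rightarrow> ('a \<Rightarrow> 'a \<Rightarrow> real) \<Rightarrow> ('a \<Rightarrow> real) \<Rightarrow> 'a \<Rightarrow> real \<Rightarrow> nat" where
  "mixing_time_from S P p x \<epsilon> =
     (LEAST t. 0 < t \<and> (\<forall>t'\<ge>t. tvdist S (matpow S P t' x) p \<le> \<epsilon>))"

definition mixing_time ::
  "'a set \<Rightarrow> ('a \<Rightarrow> 'a \<Rightarrow> real) \<Rightarrow> ('a \<Rightarrow> real) \<Rightarrow> real \<Rightarrow> nat" where
  "mixing_time S P p \<epsilon> = Max ((\<lambda>x. mixing_time_from S P p x \<epsilon>) ` S)"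

definition Estar :: "'a set \<Rightarrow> ('a \<Rightarrow> 'a \<Rightarrow> real) \<Rightarrow> ('a \<times> 'a) set" where
  "Estar S P = {(x, y). x \<in> S \<and> y \<in> S \<and> 0 < P x y}"

definition path_edges :: "'a list \<Rightarrow> ('a \<times> 'a) list" where
  "path_edges \<gamma> = zip \<gamma> (tl \<gamma>)"

definition path_len :: "'a list \<Rightarrow> nat" where
  "path_len \<gamma> = length \<gamma> - 1"

definition paths_xy :: "'a set \<Rightarrow> ('a \<Rightarrow> 'a \<Rightarrow> real) \<Rightarrow> 'a \<Rightarrow> 'a \<Rightarrow> 'a list set" where
  "paths_xy S P x y = {\<gamma>. \<gamma> \<noteq> [] \<and> hd \<gamma> = x \<and> last \<gamma> = y \<and>
      (\<forall>e\<in>set (path_edges \<gamma>). e \<in> Estar S P) \<and>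
      (\<forall>e. count_list (path_edges \<gamma>) e \<le> 2)}"

definition flow_paths ::
  "'a set \<Rightarrow> ('a \<Rightarrow> 'a \<Rightarrow> real) \<Rightarrow> ('a \<Rightarrow> 'a \<Rightarrow> real) \<Rightarrow> 'a list set" where
  "flow_paths S P P' = (\<Union>(x, y)\<in>Estar S P'. paths_xy S P x y)"

(* an (M,M')-flow; M = (S,P) with stationary p, M' = (S,P') with stationary q *)
definition is_flow ::
  "'a set \<Rightarrow> ('a \<Rightarrow> 'a \<Rightarrow> real) \<Rightarrow> ('a \<Rightarrow> 'a \<Rightarrow> real) \<Rightarrow> ('a \<Rightarrow> real)
     \<Rightarrow> ('a list \<Rightarrow> real) \<Rightarrow> bool" where
  "is_flow S P P' q f \<longleftrightarrow>
     (\<forall>\<gamma>\<in>flow_paths S P P'. 0 \<le> f \<gamma> \<and> f \<gamma> \<le> 1) \<and>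
     (\<forall>(x, y)\<in>Estar S P'. (\<Sum>\<gamma>\<in>paths_xy S P x y. f \<gamma>) = q x * P' x y)"

definition edge_congestion ::
  "'a set \<Rightarrow> ('a \<Rightarrow> 'a \<Rightarrow> real) \<Rightarrow> ('a \<Rightarrow> real) \<Rightarrow> ('a \<Rightarrow> 'a \<Rightarrow> real)
     \<Rightarrow> ('a list \<Rightarrow> real) \<Rightarrow> 'a \<Rightarrow> 'a \<Rightarrow> real" where
  "edge_congestion S P p P' f z w =
     (1 / (p z * P z w)) *
     (\<Sum>\<gamma>\<in>{\<gamma>\<in>flow_paths S P P'. (z, w) \<in> set (path_edges \<gamma>)}.
        real (count_list (path_edges \<gamma>) (z, w)) * real (path_len \<gamma>) * f \<gamma>)"

definition congestion ::
  "'a set \<Rightarrow> ('a \<Rightarrow> 'a \<Rightarrow> real) \<Rightarrow> ('a \<Rightarrow> real) \<Rightarrow> ('a \<Rightarrow> 'a \<Rightarrow> real)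
     \<Rightarrow> ('a list \<Rightarrow> real) \<Rightarrow> real" where
  "congestion S P p P' f =
     Max ((\<lambda>(z, w). edge_congestion S P p P' f z w) ` Estar S P)"

end

theory Submission imports Defs begin

(* M' is mixed after one step, whereas
   |P^t(a,.) - pi| = (1 - 2d)^t / 2, so tau_a(M, 1/4) is of order 1/d.  The flow sends the
   weight 1/4 of each pair (x, y) along the edge x -> y if x \<noteq> y and along the detour
   x -> y' -> x through the other state y' if x = y.  It never uses the holding loops, whose
   weight d vanishes, so its congestion stays at most 3, and letting d -> 0 beats every C. *)

lemma mixing_time_from_eq_1:
  assumes "\<And>t. 1 \<le> t \<Longrightarrow> tvdist S (matpow S P t x) p \<le> \<epsilon>"
  shows "mixing_time_from S P p x \<epsilon> = 1"
  unfolding mixing_time_from_def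
proof (rule Least_equality)
  show "0 < (1::nat) \<and> (\<forall>t'\<ge>1. tvdist S (matpow S P t' x) p \<le> \<epsilon>)"
    using assms by simp
qed simp

lemma less_mixing_time_from:
  assumes mixes: "\<exists>t>0. \<forall>t'\<ge>t. tvdist S (matpow S P t' x) p \<le> \<epsilon>"
    and far: "\<epsilon> < tvdist S (matpow S P n x) p"
  shows "n < mixing_time_from S P p x \<epsilon>"
proof (rule ccontr)
  define m where "m = mixing_time_from S P p x \<epsilon>"
  have "0 < m \<and> (\<forall>t'\<ge>m. tvdist S (matpow S P t' x) p \<le> \<epsilon>)"
    unfolding m_def mixing_time_from_def using mixes by (rule LeastI_ex)
  moreover assume "\<not> n < mixing_time_from S P p x \<epsilon>"
  ultimately have "tvdist S (matpow S P n x) p \<le> \<epsilon>" by (simp add: m_def)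
  with far show False by simp
qed

lemma map_snd_path_edges: "map snd (path_edges xs) = tl xs"
  unfolding path_edges_def
proof (induction xs)
  case (Cons x xs)
  then show ?case by (cases xs) auto
qed simp

lemma finite_paths_xy:
  assumes S: "finite S"
  shows "finite (paths_xy S P x y)"
proof -
  let ?edge_lists = "{es. set es \<subseteq> S \<times> S \<and> length es \<le> 2 * card (S \<times> S)}"
  have "paths_xy S P x y \<subseteq> (\<lambda>es. x # map snd es) ` ?edge_lists"
  proof
    fix \<gamma> assume \<gamma>: "\<gamma> \<in> paths_xy S P x y"
    let ?es = "path_edges \<gamma>"
    have sub: "set ?es \<subseteq> S \<times> S" using \<gamma> by (auto simp: paths_xy_def Estar_def)
    have "length ?es = (\<Sum>e\<in>S \<times> S. count_list ?es e)"
      using sum_count_set[OF sub] S by simp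
    also have "\<dots> \<le> (\<Sum>e\<in>S \<times> S. 2)"
      by (rule sum_mono) (use \<gamma> in \<open>auto simp: paths_xy_def\<close>)
    finally have len: "length ?es \<le> 2 * card (S \<times> S)" by simp
    have "\<gamma> \<noteq> []" "hd \<gamma> = x" using \<gamma> by (simp_all add: paths_xy_def)
    then have "\<gamma> = x # map snd ?es" by (metis hd_Cons_tl map_snd_path_edges)
    with sub len show "\<gamma> \<in> (\<lambda>es. x # map snd es) ` ?edge_lists"
      by (intro image_eqI[where f = "\<lambda>es. x # map snd es" and x = ?es]) simp_all
  qed
  moreover have "finite ?edge_lists"
    using finite_lists_length_le[of "S \<times> S"] S by simp
  ultimately show ?thesis by (rule finite_subset[OF _ finite_imageI])
qed

lemma finite_flow_paths:
  assumes "finite S"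
  shows "finite (flow_paths S P P')"
proof -
  have "Estar S P' \<subseteq> S \<times> S" by (auto simp: Estar_def)
  then have "finite (Estar S P')" by (rule finite_subset) (simp add: assms)
  then show ?thesis using assms by (auto simp: flow_paths_def finite_paths_xy)
qed

definition two_state_chain :: "real \<Rightarrow> 'a \<Rightarrow> 'a \<Rightarrow> real" where
  "two_state_chain d x y = (if x = y then d else 1 - d)"

lemma matpow_two_state_chain:
  assumes "a \<noteq> b" "x \<in> {a, b}" "y \<in> {a, b}"
  shows "matpow {a, b} (two_state_chain d) t x y =
    (if x = y then (1 + (2 * d - 1) ^ t) / 2 else (1 - (2 * d - 1) ^ t) / 2)"
  using assms(3)
proof (induction t arbitrary: y)
  case (Suc t)
  have "matpow {a, b} (two_state_chain d) (Suc t) x y =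
      matpow {a, b} (two_state_chain d) t x a * two_state_chain d a y +
      matpow {a, b} (two_state_chain d) t x b * two_state_chain d b y"
    using assms(1) by simp
  then show ?case
    using assms(1,2) Suc.prems Suc.IH[of a] Suc.IH[of b]
    by (auto simp: two_state_chain_def field_simps)
qed simp

lemma tvdist_two_state_chain:
  assumes "a \<noteq> b" "x \<in> {a, b}"
  shows "tvdist {a, b} (matpow {a, b} (two_state_chain d) t x) (\<lambda>_. 1/2) = \<bar>2 * d - 1\<bar> ^ t / 2"
proof -
  have "\<bar>matpow {a, b} (two_state_chain d) t x y - 1/2\<bar> = \<bar>2 * d - 1\<bar> ^ t / 2"
    if "y \<in> {a, b}" for y
  proof -
    have deviation: "matpow {a, b} (two_state_chain d) t x y - 1/2 =
        (if x = y then 1 else -1) * (2 * d - 1) ^ t / 2"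
      using matpow_two_state_chain[OF assms that, of d t] by (simp add: field_simps)
    show ?thesis unfolding deviation by (simp add: abs_mult power_abs)
  qed
  then show ?thesis using assms(1) by (simp add: tvdist_def)
qed

lemma ergodic_two_state_chain:
  assumes "a \<noteq> b" "0 < d" "d < 1"
  shows "ergodic {a, b} (two_state_chain d)"
proof -
  have one_step: "matpow {a, b} (two_state_chain d) 1 x y = two_state_chain d x y"
    if "x \<in> {a, b}" "y \<in> {a, b}" for x y
    using matpow_two_state_chain[OF assms(1) that, of d 1] by (auto simp: two_state_chain_def)
  have "irreducible_chain {a, b} (two_state_chain d)"
    unfolding irreducible_chain_def
  proof (intro ballI)
    fix x y assume "x \<in> {a, b}" "y \<in> {a, b}"
    then show "\<exists>t. 0 < matpow {a, b} (two_state_chain d) t x y"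
      using assms one_step by (cases "x = y") (auto simp: two_state_chain_def intro!: exI[of _ 1])
  qed
  moreover have "aperiodic_chain {a, b} (two_state_chain d)"
    unfolding aperiodic_chain_def
  proof (intro ballI)
    fix x assume "x \<in> {a, b}"
    then have "1 \<in> {t. 1 \<le> t \<and> 0 < matpow {a, b} (two_state_chain d) t x x}"
      using assms one_step by (simp add: two_state_chain_def)
    then show "Gcd {t. 1 \<le> t \<and> 0 < matpow {a, b} (two_state_chain d) t x x} = 1"
      using Gcd_dvd by (metis nat_dvd_1_iff_1)
  qed
  moreover have "stochastic {a, b} (two_state_chain d)"
    using assms by (auto simp: stochastic_def two_state_chain_def)
  ultimately show ?thesis by (simp add: ergodic_def)
qed

lemma stationary_two_state_chain:
  "a \<noteq> b \<Longrightarrow> stationary {a, b} (two_state_chain d) (\<lambda>_. 1/2)"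
  by (auto simp: stationary_def two_state_chain_def)

lemma reversible_two_state_chain: "reversible {a, b} (two_state_chain d) (\<lambda>_. 1/2)"
  by (auto simp: reversible_def two_state_chain_def)

lemma mixing_time_two_state_chain_half:
  assumes "a \<noteq> b" "0 \<le> \<epsilon>"
  shows "mixing_time {a, b} (two_state_chain (1/2)) (\<lambda>_. 1/2) \<epsilon> = 1"
proof -
  have "mixing_time_from {a, b} (two_state_chain (1/2)) (\<lambda>_. 1/2) x \<epsilon> = 1" if "x \<in> {a, b}" for x
  proof (rule mixing_time_from_eq_1)
    fix t :: nat assume "1 \<le> t"
    then show "tvdist {a, b} (matpow {a, b} (two_state_chain (1/2)) t x) (\<lambda>_. 1/2) \<le> \<epsilon>"
      using assms by (simp add: tvdist_two_state_chain[OF assms(1) that] power_0_left)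
  qed
  then show ?thesis by (simp add: mixing_time_def)
qed

lemma less_mixing_time_from_two_state_chain:
  fixes d :: real and n :: nat
  assumes "a \<noteq> b" "0 < d" "0 < n" "8 * d * n \<le> 1"
  shows "n < mixing_time_from {a, b} (two_state_chain d) (\<lambda>_. 1/2) a (1/4)"
proof (rule less_mixing_time_from)
  have "d \<le> d * n" using assms by simp
  then have d: "0 < 1 - 2 * d" "1 - 2 * d < 1" using assms by linarith+
  have tv: "tvdist {a, b} (matpow {a, b} (two_state_chain d) t a) (\<lambda>_. 1/2) = (1 - 2 * d) ^ t / 2"
    for t
    using tvdist_two_state_chain[OF assms(1), of a d t] d by simp
  have "1/2 < 1 - real n * (2 * d)" using assms(4) by (simp add: algebra_simps)
  also have "\<dots> \<le> (1 - 2 * d) ^ n"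
    using Bernoulli_inequality[of "- (2 * d)" n] d by simp
  finally show "1/4 < tvdist {a, b} (matpow {a, b} (two_state_chain d) n a) (\<lambda>_. 1/2)"
    unfolding tv by simp
  obtain m where m: "(1 - 2 * d) ^ m < 1/2"
    using real_arch_pow_inv[of "1/2" "1 - 2 * d"] d by auto
  have "(1 - 2 * d) ^ t / 2 \<le> 1/4" if "m \<le> t" for t
  proof -
    have "(1 - 2 * d) ^ t \<le> (1 - 2 * d) ^ m" using that d by (intro power_decreasing) auto
    with m show ?thesis by simp
  qed
  then show "\<exists>t>0. \<forall>t'\<ge>t. tvdist {a, b} (matpow {a, b} (two_state_chain d) t' a) (\<lambda>_. 1/2) \<le> 1/4"
    unfolding tv by (intro exI[of _ "Suc m"]) auto
qed

definition detour_paths :: "'a \<Rightarrow> 'a \<Rightarrow> 'a list set" where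
  "detour_paths a b = {[a, b], [b, a], [a, b, a], [b, a, b]}"

definition detour_flow :: "'a \<Rightarrow> 'a \<Rightarrow> 'a list \<Rightarrow> real" where
  "detour_flow a b \<gamma> = (if \<gamma> \<in> detour_paths a b then 1/4 else 0)"

lemma detour_path_in_paths_xy:
  assumes "a \<noteq> b" "0 < d" "d < 1" "\<gamma> \<in> detour_paths a b"
  shows "\<gamma> \<in> paths_xy {a, b} (two_state_chain d) (hd \<gamma>) (last \<gamma>)"
proof -
  have "\<gamma> \<noteq> [] \<and> set (path_edges \<gamma>) \<subseteq> {(a, b), (b, a)} \<and> length (path_edges \<gamma>) \<le> 2"
    using assms(4) unfolding detour_paths_def by (elim insertE) (auto simp: path_edges_def)
  moreover have "{(a, b), (b, a)} \<subseteq> Estar {a, b} (two_state_chain d)"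
    using assms(1,3) by (auto simp: Estar_def two_state_chain_def)
  ultimately show ?thesis
    unfolding paths_xy_def by (blast intro: le_trans[OF count_le_length])
qed

lemma paths_xy_two_state_chain_inter_detour_paths:
  assumes "a \<noteq> b" "0 < d" "d < 1"
  shows "paths_xy {a, b} (two_state_chain d) x y \<inter> detour_paths a b =
    {\<gamma> \<in> detour_paths a b. hd \<gamma> = x \<and> last \<gamma> = y}"
  using detour_path_in_paths_xy[OF assms] by (auto simp: paths_xy_def)

lemma is_flow_detour_flow:
  assumes "a \<noteq> b" "0 < d" "d < 1"
  shows "is_flow {a, b} (two_state_chain d) (two_state_chain (1/2)) (\<lambda>_. 1/2) (detour_flow a b)"
proof -
  have "(\<Sum>\<gamma>\<in>paths_xy {a, b} (two_state_chain d) x y. detour_flow a b \<gamma>) =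
      1/2 * two_state_chain (1/2) x y"
    if "(x, y) \<in> Estar {a, b} (two_state_chain (1/2))" for x y
  proof -
    have "(\<Sum>\<gamma>\<in>paths_xy {a, b} (two_state_chain d) x y. detour_flow a b \<gamma>) =
        (\<Sum>\<gamma>\<in>paths_xy {a, b} (two_state_chain d) x y \<inter> detour_paths a b. 1/4)"
      unfolding detour_flow_def by (rule sum.inter_restrict[symmetric]) (simp add: finite_paths_xy)
    also have "\<dots> = (\<Sum>\<gamma>\<in>{\<gamma> \<in> detour_paths a b. hd \<gamma> = x \<and> last \<gamma> = y}. 1/4)"
      by (simp only: paths_xy_two_state_chain_inter_detour_paths[OF assms])
    also have "\<dots> = (\<Sum>\<gamma>\<in>detour_paths a b. if hd \<gamma> = x \<and> last \<gamma> = y then 1/4 else 0)"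
      by (rule sum.inter_filter) (simp add: detour_paths_def)
    also have "\<dots> = 1/4"
    proof -
      have "x \<in> {a, b}" "y \<in> {a, b}" using that by (auto simp: Estar_def)
      then show ?thesis using assms(1) unfolding detour_paths_def by (elim insertE) auto
    qed
    also have "\<dots> = 1/2 * two_state_chain (1/2) x y" by (simp add: two_state_chain_def)
    finally show ?thesis .
  qed
  moreover have "0 \<le> detour_flow a b \<gamma> \<and> detour_flow a b \<gamma> \<le> 1" for \<gamma>
    by (simp add: detour_flow_def)
  ultimately show ?thesis unfolding is_flow_def by blast
qed

lemma edge_congestion_detour_flow_le:
  assumes "a \<noteq> b" "0 < d" "d \<le> 1/6" "z \<in> {a, b}" "w \<in> {a, b}"
  shows "edge_congestion {a, b} (two_state_chain d) (\<lambda>_. 1/2) (two_state_chain (1/2))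
    (detour_flow a b) z w \<le> 3"
proof -
  let ?B = "{\<gamma> \<in> flow_paths {a, b} (two_state_chain d) (two_state_chain (1/2)).
    (z, w) \<in> set (path_edges \<gamma>)}"
  let ?load = "\<lambda>\<gamma>. real (count_list (path_edges \<gamma>) (z, w)) * real (path_len \<gamma>)"
  have "(\<Sum>\<gamma>\<in>?B. ?load \<gamma> * detour_flow a b \<gamma>) = (\<Sum>\<gamma>\<in>?B \<inter> detour_paths a b. ?load \<gamma> / 4)"
    by (subst sum.inter_restrict) (auto simp: finite_flow_paths detour_flow_def intro!: sum.cong)
  also have "\<dots> \<le> (\<Sum>\<gamma>\<in>detour_paths a b. ?load \<gamma> / 4)"
    by (rule sum_mono2) (auto simp: detour_paths_def)
  \<comment> \<open>(a, b) lies on [a, b], [a, b, a] and [b, a, b], of lengths 1, 2 and 2\<close>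
  also have "\<dots> = (if z = w then 0 else 5/4)"
    using assms(4,5,1) unfolding detour_paths_def
    by (elim insertE) (auto simp: path_edges_def path_len_def)
  finally have "(\<Sum>\<gamma>\<in>?B. ?load \<gamma> * detour_flow a b \<gamma>) \<le> (if z = w then 0 else 5/4)" .
  then have "edge_congestion {a, b} (two_state_chain d) (\<lambda>_. 1/2) (two_state_chain (1/2))
      (detour_flow a b) z w \<le> 1 / (1/2 * two_state_chain d z w) * (if z = w then 0 else 5/4)"
    unfolding edge_congestion_def using assms(2,3)
    by (intro mult_left_mono) (auto simp: two_state_chain_def)
  also have "\<dots> \<le> 3" using assms(2,3) by (auto simp: two_state_chain_def field_simps)
  finally show ?thesis .
qed

lemma congestion_detour_flow_le:
  assumes "a \<noteq> b" "0 < d" "d \<le> 1/6"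
  shows "congestion {a, b} (two_state_chain d) (\<lambda>_. 1/2) (two_state_chain (1/2)) (detour_flow a b)
    \<le> 3"
proof -
  have "Estar {a, b} (two_state_chain d) = {a, b} \<times> {a, b}"
    using assms by (auto simp: Estar_def two_state_chain_def)
  then show ?thesis
    using edge_congestion_detour_flow_le[OF assms] by (simp add: congestion_def)
qed

theorem mainTheorem5:
  fixes C :: real
  assumes "0 < C"
  shows "\<exists>(S :: nat set) a b P P' p f.
    a \<noteq> b \<and> S = {a, b} \<and>
    ergodic S P \<and> ergodic S P' \<and>
    reversible S P p \<and> reversible S P' p \<and>
    stationary S P p \<and> stationary S P' p \<and>
    is_flow S P P' p f \<and>
    congestion S P p P' f \<le> 3 \<and>
    real (mixing_time_from S P p a (1/4)) >
      C * congestion S P p P' f * (real (mixing_time S P' p (1 / (2 * exp 1))) + 1)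
        * ln (1 / ((1/4) * p a))"
proof -
  obtain n :: nat where n: "6 * C * ln 8 < n" using reals_Archimedean2 by blast
  have "0 < 6 * C * ln (8::real)" using assms by simp
  with n have "0 < n" by simp
  define d where "d = 1 / (8 * real n)"
  have d: "0 < d" "d \<le> 1/6" "8 * d * n \<le> 1" using \<open>0 < n\<close> by (auto simp: d_def field_simps)
  have d1: "d < 1" using d(2) by simp
  have ab: "(0::nat) \<noteq> 1" by simp
  let ?A = "congestion {0::nat, 1} (two_state_chain d) (\<lambda>_. 1/2) (two_state_chain (1/2))
    (detour_flow 0 1)"
  have A: "?A \<le> 3" by (rule congestion_detour_flow_le[OF ab d(1,2)])
  let ?\<tau>' = "mixing_time {0::nat, 1} (two_state_chain (1/2)) (\<lambda>_. 1/2) (1 / (2 * exp 1))"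
  have "?\<tau>' = 1" by (rule mixing_time_two_state_chain_half[OF ab]) simp
  then have "C * ?A * (real ?\<tau>' + 1) * ln (1 / ((1/4) * (1/2))) = (2 * C * ln 8) * ?A" by simp
  also have "\<dots> \<le> (2 * C * ln 8) * 3" using A assms by (intro mult_left_mono) auto
  also have "\<dots> < n" using n by simp
  also have "\<dots> < mixing_time_from {0::nat, 1} (two_state_chain d) (\<lambda>_. 1/2) 0 (1/4)"
    using less_mixing_time_from_two_state_chain[OF ab d(1) \<open>0 < n\<close> d(3)] by simp
  finally have bound: "C * ?A * (real ?\<tau>' + 1) * ln (1 / ((1/4) * (1/2))) <
    mixing_time_from {0::nat, 1} (two_state_chain d) (\<lambda>_. 1/2) 0 (1/4)" .
  show ?thesis
    by (rule exI[of _ "{0::nat, 1}"], rule exI[of _ 0], rule exI[of _ 1],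
        rule exI[of _ "two_state_chain d"], rule exI[of _ "two_state_chain (1/2)"],
        rule exI[of _ "\<lambda>_. 1/2"], rule exI[of _ "detour_flow 0 1"])
      (use A bound ergodic_two_state_chain[OF ab d(1) d1] ergodic_two_state_chain[OF ab, of "1/2"]
        reversible_two_state_chain[of "0::nat" 1] stationary_two_state_chain[OF ab]
        is_flow_detour_flow[OF ab d(1) d1] in simp)
qed

end
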